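(* Let $n\ge2$, $0<\sigma<\frac1{n+2}$ and $\epsilon_2>0$. For $R>0$ define $$X=\big(R^{\sigma-1}\mathbb{Z}^n+B(0,\tfrac{\epsilon_2}{R})\big)\cap\mathcal{A}_{4^{-n-2},2\sqrt n},\qquad T=(R^{2\sigma-1}\mathbb{Z})\cap(4^{-n-1},1),$$ and $\frac{XR}{T}=\{\frac{xR}{t}:x\in X,\ t\in T\}$. Then there is a constant $c>0$ (independent of $R$) such that whenever $R^\sigma$ is a sufficiently large integer, $$\Big|\frac{XR}{T}\cap B(0,R)\Big|\ge cR^n.$$
   Context: For $0<u<v$, $\mathcal{A}_{u,v}=\{x\in\mathbb{R}^n:u<|x|<v\}$; $B(0,r)$ is the open ball of radius $r$ centered at $0$; $A+B$ is the Minkowski sum; $|\cdot|$ is Lebesgue measure on $\mathbb{R}^n$. *)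

theory Defs
  imports "HOL-Analysis.Analysis"
begin

definition annulus :: "real \<Rightarrow> real \<Rightarrow> ('a::real_normed_vector) set" where
  "annulus u v = {x. u < norm x \<and> norm x < v}"

definition minkowski_sum :: "('a::plus) set \<Rightarrow> 'a set \<Rightarrow> 'a set" where
  "minkowski_sum A B = {a + b | a b. a \<in> A \<and> b \<in> B}"

definition int_lattice :: "(real ^ 'n) set" where
  "int_lattice = {z. \<forall>i. z $ i \<in> \<int>}"

definition setX :: "real \<Rightarrow> real \<Rightarrow> real \<Rightarrow> (real ^ 'n) set" where
  "setX \<sigma> \<epsilon>2 R =
     minkowski_sum ((\<lambda>z. (R powr (\<sigma> - 1)) *\<^sub>R z) ` int_lattice) (ball 0 (\<epsilon>2 / R))
     \<inter> annulus (4 powr (- real CARD('n) - 2)) (2 * sqrt (real CARD('n)))"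

definition setT :: "real \<Rightarrow> real \<Rightarrow> real set" where
  "setT \<sigma> R = {R powr (2 * \<sigma> - 1) * real_of_int k | k. True} \<inter>
                {4 powr (- real CARD('n) - 1) <..< 1}"

end

theory Submission
  imports Defs
begin

text \<open>
  Write m = R^\<sigma>, r = R/m and K = R/m^2. A point y with R/4 < |y| < R/2 lies in
  XR/T \<inter> B(0,R) as soon as it is within \<epsilon>2 of (r/q) Z^n for an integer q in (K/4^(n+1), K):
  take t = q/K in T and x = t y/R in X.  Dirichlet's theorem gives every y a denominator
  q \<le> Q^n with |y - (r/q) z|_\<infinity> < r/(qQ).  Choosing Q^n \<approx> K/2 forces q < K, and since
  K = m^n m^(1/\<sigma> - n - 2) with 1/\<sigma> > n + 2, Q can be taken so large compared with m that the
  error is below \<epsilon>2/n whenever q > K/4^(n+1).  In the cube [2s,3s]^n, s = R/(7 sqrt n), which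
  lies in the annulus, the points whose denominator is at most K/4^(n+1) are covered by the
  boxes of radius r/(qQ) around (r/q) Z^n, q \<le> K/4^(n+1); these have total volume at most
  (3/4) s^n, and the remaining quarter of the cube lies in XR/T \<inter> B(0,R).
\<close>

lemma one_plus_power_le:
  fixes x :: real
  assumes "0 \<le> x" "x \<le> 1"
  shows "(1 + x) ^ n \<le> 1 + (2 ^ n - 1) * x"
proof (induction n)
  case (Suc n)
  have "(1 + x) ^ Suc n \<le> (1 + (2 ^ n - 1) * x) * (1 + x)"
    using Suc.IH assms by (simp add: mult_right_mono)
  also have "\<dots> = 1 + 2 ^ n * x + (2 ^ n - 1) * (x * x)"
    by (simp add: algebra_simps)
  also have "\<dots> \<le> 1 + 2 ^ n * x + (2 ^ n - 1) * x"
    using assms by (intro add_left_mono mult_left_mono) (auto intro: mult_left_le)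
  finally show ?case by (simp add: algebra_simps)
qed simp

lemma power_add_le_three_halves:
  fixes s u :: real
  assumes s: "0 < s" and u: "0 \<le> u" "2 ^ n * u \<le> s / 2"
  shows "(s + u) ^ n \<le> 3 / 2 * s ^ n"
proof -
  define x where "x = u / s"
  have x: "0 \<le> x" "2 ^ n * x \<le> 1 / 2"
    using s u by (simp_all add: x_def field_simps)
  moreover have "x \<le> 1"
    using x mult_right_mono[of 1 "2 ^ n" x] by simp
  ultimately have "(1 + x) ^ n \<le> 1 + (2 ^ n - 1) * x"
    by (intro one_plus_power_le)
  then have "(1 + x) ^ n \<le> 3 / 2"
    using x by (simp add: left_diff_distrib)
  moreover have "(s + u) ^ n = s ^ n * (1 + x) ^ n"
    using s by (simp add: x_def power_mult_distrib[symmetric] field_simps)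
  ultimately show ?thesis
    using s by simp
qed

lemma exists_nat_power_bracket:
  fixes K d :: real and N :: nat
  assumes "N \<ge> 1" "d \<ge> 1" "2 * d ^ N \<le> K"
  obtains Q :: nat where "Q \<ge> 1" "d - 1 < real Q" "2 * real Q ^ N \<le> K" "K < 2 ^ (N + 1) * real Q ^ N"
proof -
  define u where "u = (K / 2) powr (1 / real N)"
  have K_pos: "K / 2 > 0"
    using assms(2,3) one_le_power[of d N] by linarith
  then have u: "u > 0" "u ^ N = K / 2"
    using assms(1) by (simp_all add: u_def powr_realpow[symmetric] powr_powr)
  have "d ^ N \<le> u ^ N"
    using u assms by linarith
  then have "d \<le> u"
    using power_mono_iff[of d u N] u assms(1,2) by simp
  define Q where "Q = nat \<lfloor>u\<rfloor>"
  have Q: "real Q \<le> u" "u < real Q + 1" "Q \<ge> 1"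
    using u \<open>d \<le> u\<close> assms(2) unfolding Q_def by linarith+
  have "real Q ^ N \<le> u ^ N"
    using Q by (simp add: power_mono)
  then have "2 * real Q ^ N \<le> K"
    using u by simp
  moreover have "K / 2 < (2 * real Q) ^ N"
  proof -
    have "u ^ N < (real Q + 1) ^ N" using Q u assms(1) by (intro power_strict_mono) auto
    also have "\<dots> \<le> (2 * real Q) ^ N" using Q by (intro power_mono) auto
    finally show ?thesis using u by simp
  qed
  ultimately show thesis
    using Q \<open>d \<le> u\<close> by (intro that) (auto simp: power_mult_distrib)
qed

section \<open>Simultaneous Diophantine approximation in a cube\<close>

lemma simultaneous_dirichlet:
  fixes w :: "real ^ 'n::finite" and Q :: nat
  assumes "Q \<ge> 1"
  obtains q :: nat and z :: "int ^ 'n"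
  where "1 \<le> q" "q \<le> Q ^ CARD('n)" "\<And>i. \<bar>real q * w $ i - of_int (z $ i)\<bar> < 1 / real Q"
proof -
  define cell where "cell j = (\<lambda>i. \<lfloor>real Q * frac (real j * w $ i)\<rfloor>)" for j :: nat
  define cells where "cells = PiE (UNIV :: 'n set) (\<lambda>_. {0..int Q - 1})"
  have cell_in: "cell ` {0..Q ^ CARD('n)} \<subseteq> cells"
  proof -
    have "\<lfloor>real Q * frac x\<rfloor> \<in> {0..int Q - 1}" for x
      using frac_lt_1[of x] frac_ge_0[of x] assms
      by (auto simp: floor_less_iff mult_less_cancel_left1)
    then show ?thesis unfolding cell_def cells_def by auto
  qed
  have "card cells < card {0..Q ^ CARD('n)}"
    unfolding cells_def using assms by (simp add: card_PiE)
  then have "\<not> inj_on cell {0..Q ^ CARD('n)}"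
    using card_inj_on_le[OF _ cell_in] by (fastforce simp: cells_def finite_PiE)
  then obtain j1 j2 where j: "j1 < j2" "j2 \<le> Q ^ CARD('n)" "cell j1 = cell j2"
    unfolding inj_on_def by (metis atLeastAtMost_iff linorder_neqE_nat)
  define z :: "int ^ 'n" where "z = (\<chi> i. \<lfloor>real j2 * w $ i\<rfloor> - \<lfloor>real j1 * w $ i\<rfloor>)"
  have "\<bar>real (j2 - j1) * w $ i - of_int (z $ i)\<bar> < 1 / real Q" for i
  proof -
    define a1 a2 where "a1 = frac (real j1 * w $ i)" and "a2 = frac (real j2 * w $ i)"
    have "\<lfloor>real Q * a1\<rfloor> = \<lfloor>real Q * a2\<rfloor>"
      using j(3) unfolding cell_def a1_def a2_def by meson
    then have "\<bar>real Q * a2 - real Q * a1\<bar> < 1"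
      by linarith
    then have "real Q * \<bar>a2 - a1\<bar> < 1"
      by (simp add: abs_mult right_diff_distrib[symmetric])
    then have "\<bar>a2 - a1\<bar> < 1 / real Q"
      using assms by (simp add: field_simps)
    moreover have "real (j2 - j1) * w $ i - of_int (z $ i) = a2 - a1"
      using j(1) by (simp add: z_def a1_def a2_def frac_def of_nat_diff algebra_simps)
    ultimately show ?thesis by simp
  qed
  with j show ?thesis by (intro that[of "j2 - j1" z]) auto
qed

lemma simultaneous_dirichlet_scaled:
  fixes y :: "real ^ 'n::finite" and Q :: nat and r :: real
  assumes "Q \<ge> 1" "r > 0"
  obtains q :: nat and z :: "int ^ 'n"
  where "1 \<le> q" "q \<le> Q ^ CARD('n)"
    "\<And>i. \<bar>y $ i - r / real q * of_int (z $ i)\<bar> < r / (real q * real Q)"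
proof -
  obtain q z where q: "1 \<le> q" "q \<le> Q ^ CARD('n)"
    and z: "\<And>i. \<bar>real q * (y $ i / r) - of_int (z $ i)\<bar> < 1 / real Q"
    using simultaneous_dirichlet[OF assms(1), of "(1 / r) *\<^sub>R y"] by auto
  have "\<bar>y $ i - r / real q * of_int (z $ i)\<bar> < r / (real q * real Q)" for i
  proof -
    have "\<bar>y $ i - r / real q * of_int (z $ i)\<bar>
          = r / real q * \<bar>real q * (y $ i / r) - of_int (z $ i)\<bar>"
      using q assms by (simp add: abs_mult[symmetric] field_simps)
    also have "\<dots> < r / real q * (1 / real Q)"
      using z[of i] q assms by (intro mult_strict_left_mono) auto
    finally show ?thesis by simp
  qed
  with q show ?thesis by (rule that)
qed

lemma finite_int_box_card_le:
  fixes lo hi :: real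
  assumes "lo \<le> hi"
  defines "Z \<equiv> {z :: int ^ 'n::finite. \<forall>i. lo \<le> of_int (z $ i) \<and> of_int (z $ i) \<le> hi}"
  shows "finite Z" "real (card Z) \<le> (hi - lo + 1) ^ CARD('n)"
proof -
  define P where "P = PiE (UNIV :: 'n set) (\<lambda>_. {\<lceil>lo\<rceil>..\<lfloor>hi\<rfloor>})"
  have Z_sub: "Z \<subseteq> vec_lambda ` P"
  proof
    fix z assume "z \<in> Z"
    then have "vec_nth z \<in> P"
      unfolding Z_def P_def by (auto simp: ceiling_le_iff le_floor_iff)
    then show "z \<in> vec_lambda ` P"
      by (metis image_eqI vec_nth_inverse)
  qed
  have "finite P" unfolding P_def by (simp add: finite_PiE)
  then show "finite Z" using Z_sub finite_surj by blast
  have "card Z \<le> card P"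
    using Z_sub \<open>finite P\<close> by (meson card_image_le card_mono finite_imageI order_trans)
  also have "card P = nat (\<lfloor>hi\<rfloor> - \<lceil>lo\<rceil> + 1) ^ CARD('n)"
    unfolding P_def by (simp add: card_PiE)
  finally have "real (card Z) \<le> real (nat (\<lfloor>hi\<rfloor> - \<lceil>lo\<rceil> + 1)) ^ CARD('n)"
    by (metis of_nat_le_iff of_nat_power)
  also have "\<dots> \<le> (hi - lo + 1) ^ CARD('n)"
    using assms by (intro power_mono) linarith+
  finally show "real (card Z) \<le> (hi - lo + 1) ^ CARD('n)" .
qed

lemma measure_cbox_cart:
  fixes a b :: "real ^ 'n::finite"
  assumes "\<And>i. a $ i \<le> b $ i"
  shows "measure lebesgue (cbox a b) = (\<Prod>i\<in>UNIV. b $ i - a $ i)"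
proof -
  have "cbox a b \<noteq> {}"
    using assms by (metis empty_iff interval_cbox_cart(1) mem_box_cart(2) order_refl)
  then show ?thesis
    by (simp add: content_cbox_cart)
qed

definition near_lattice :: "real \<Rightarrow> real \<Rightarrow> (real ^ 'n::finite) set" where
  "near_lattice h \<rho> = {y. \<exists>z :: int ^ 'n. \<forall>i. \<bar>y $ i - h * of_int (z $ i)\<bar> \<le> \<rho>}"

lemma measure_cbox_Int_near_lattice_le:
  fixes a b h \<rho> :: real
  assumes "0 < h" "0 \<le> \<rho>" "a \<le> b"
  defines "C \<equiv> cbox (\<chi> _. a) (\<chi> _. b) :: (real ^ 'n::finite) set"
  shows "C \<inter> near_lattice h \<rho> \<in> lmeasurable"
    and "measure lebesgue (C \<inter> near_lattice h \<rho>) \<le> ((b - a + 2 * \<rho>) / h + 1) ^ CARD('n) * (2 * \<rho>) ^ CARD('n)"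
proof -
  define Z where "Z = {z :: int ^ 'n. \<forall>i. (a - \<rho>) / h \<le> of_int (z $ i) \<and> of_int (z $ i) \<le> (b + \<rho>) / h}"
  define cube where "cube z = cbox (\<chi> i. h * of_int (z $ i) - \<rho>) (\<chi> i. h * of_int (z $ i) + \<rho>)" for z :: "int ^ 'n"
  have box: "(a - \<rho>) / h \<le> (b + \<rho>) / h"
    using assms by (simp add: divide_right_mono)
  note Z = finite_int_box_card_le[OF box, where 'n='n, folded Z_def]
  have eq: "C \<inter> near_lattice h \<rho> = C \<inter> (\<Union>z\<in>Z. cube z)"
  proof (intro equalityI subsetI)
    fix y assume "y \<in> C \<inter> near_lattice h \<rho>"
    then obtain z where y: "\<And>i. a \<le> y $ i \<and> y $ i \<le> b" and z: "\<And>i. \<bar>y $ i - h * of_int (z $ i)\<bar> \<le> \<rho>"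
      by (auto simp: C_def near_lattice_def mem_box_cart)
    have "a - \<rho> \<le> h * of_int (z $ i) \<and> h * of_int (z $ i) \<le> b + \<rho>" for i
      using y[of i] z[of i] by linarith
    then have "z \<in> Z"
      using assms(1) by (simp add: Z_def pos_divide_le_eq pos_le_divide_eq mult.commute)
    moreover have "y \<in> cube z"
      using z unfolding cube_def mem_box_cart abs_le_iff by (simp add: algebra_simps)
    ultimately show "y \<in> C \<inter> (\<Union>z\<in>Z. cube z)"
      using \<open>y \<in> C \<inter> _\<close> by blast
  qed (auto simp: near_lattice_def cube_def mem_box_cart abs_le_iff algebra_simps)
  have cube_lm: "cube z \<in> lmeasurable" for z
    by (simp add: cube_def)
  have measure_cube: "measure lebesgue (cube z) = (2 * \<rho>) ^ CARD('n)" for z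
    unfolding cube_def using assms(2) by (subst measure_cbox_cart) auto
  show lm: "C \<inter> near_lattice h \<rho> \<in> lmeasurable"
    unfolding eq using Z(1) cube_lm by (intro fmeasurable.Int fmeasurable.finite_UN) (auto simp: C_def)
  have "measure lebesgue (C \<inter> near_lattice h \<rho>) \<le> measure lebesgue (\<Union>z\<in>Z. cube z)"
    using eq Z(1) cube_lm lm by (intro measure_mono_fmeasurable) (auto intro: fmeasurableD)
  also have "\<dots> \<le> (\<Sum>z\<in>Z. measure lebesgue (cube z))"
    using Z(1) cube_lm by (intro measure_UNION_le) auto
  also have "\<dots> = real (card Z) * (2 * \<rho>) ^ CARD('n)"
    by (simp add: measure_cube)
  also have "\<dots> \<le> ((b + \<rho>) / h - (a - \<rho>) / h + 1) ^ CARD('n) * (2 * \<rho>) ^ CARD('n)"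
    using Z(2) assms(2) by (intro mult_right_mono) auto
  also have "(b + \<rho>) / h - (a - \<rho>) / h = (b - a + 2 * \<rho>) / h"
    by (simp add: diff_divide_distrib[symmetric])
  finally show "measure lebesgue (C \<inter> near_lattice h \<rho>) \<le> ((b - a + 2 * \<rho>) / h + 1) ^ CARD('n) * (2 * \<rho>) ^ CARD('n)" .
qed

lemma measure_cbox_Int_near_lattice_dirichlet_le:
  fixes a s r :: real and q Q :: nat
  assumes s: "0 < s" and r: "0 < r" and q: "1 \<le> q" and Q: "1 \<le> Q"
  defines "\<rho> \<equiv> r / (real q * real Q)"
  shows "measure lebesgue (cbox (\<chi> _. a) (\<chi> _. a + s) \<inter> near_lattice (r / real q) \<rho> :: (real ^ 'n::finite) set)
    \<le> (2 / real Q * (s + 3 * r)) ^ CARD('n)"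
proof -
  have pos: "0 < r / real q" "0 \<le> \<rho>" "a \<le> a + s"
    using s r q by (auto simp: \<rho>_def)
  have "((a + s - a + 2 * \<rho>) / (r / real q) + 1) * (2 * \<rho>)
        = 2 * s / real Q + 4 * r / (real q * real Q ^ 2) + 2 * r / (real q * real Q)"
    using r q Q by (simp add: \<rho>_def field_simps power2_eq_square)
  also have "\<dots> \<le> 2 * s / real Q + 4 * r / real Q + 2 * r / real Q"
  proof -
    have "real Q \<le> real q * real Q"
      using mult_right_mono[of 1 "real q" "real Q"] q by simp
    moreover have "real Q \<le> real q * real Q ^ 2"
      using q Q by (metis le_trans mult_1 mult_le_mono1 of_nat_le_iff of_nat_mult power2_eq_square)
    ultimately show ?thesis
      using r Q by (intro add_mono order_refl divide_left_mono) auto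
  qed
  also have "\<dots> = 2 / real Q * (s + 3 * r)"
    by (simp add: field_simps add_divide_distrib)
  finally have "((a + s - a + 2 * \<rho>) / (r / real q) + 1) ^ CARD('n) * (2 * \<rho>) ^ CARD('n)
      \<le> (2 / real Q * (s + 3 * r)) ^ CARD('n)"
    using pos r by (subst power_mult_distrib[symmetric]) (intro power_mono, auto intro!: mult_nonneg_nonneg)
  with measure_cbox_Int_near_lattice_le(2)[OF pos, where 'n = 'n] show ?thesis
    by simp
qed

lemma large_well_approximable_subset_cbox:
  fixes a s r :: real and Q n :: nat
  assumes "0 < s" "0 < r" "1 \<le> Q"
  obtains G :: "(real ^ 'n::finite) set"
  where "G \<in> lmeasurable" "G \<subseteq> cbox (\<chi> _. a) (\<chi> _. a + s)"
    "s ^ CARD('n) - real n * (2 / real Q * (s + 3 * r)) ^ CARD('n) \<le> measure lebesgue G"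
    "\<And>y. y \<in> G \<Longrightarrow> \<exists>q :: nat. n < q \<and> q \<le> Q ^ CARD('n) \<and>
       (\<exists>z :: int ^ 'n. \<forall>i. \<bar>y $ i - r / real q * of_int (z $ i)\<bar> < r / (real q * real Q))"
proof -
  define C :: "(real ^ 'n) set" where "C = cbox (\<chi> _. a) (\<chi> _. a + s)"
  define Bad_q where "Bad_q q = C \<inter> near_lattice (r / real q) (r / (real q * real Q))" for q :: nat
  define Bad where "Bad = (\<Union>q\<in>{1..n}. Bad_q q)"
  have C_lm: "C \<in> lmeasurable" by (simp add: C_def)
  have Bad_q_lm: "Bad_q q \<in> lmeasurable" if "1 \<le> q" for q
    using that assms measure_cbox_Int_near_lattice_le(1)[of "r / real q" "r / (real q * real Q)" a "a + s"]
    by (simp add: Bad_q_def C_def)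
  have Bad_lm: "Bad \<in> lmeasurable"
    unfolding Bad_def using Bad_q_lm by (intro fmeasurable.finite_UN) auto
  have "measure lebesgue Bad \<le> (\<Sum>q\<in>{1..n}. measure lebesgue (Bad_q q))"
    unfolding Bad_def using Bad_q_lm by (intro measure_UNION_le) auto
  also have "\<dots> \<le> (\<Sum>q\<in>{1..n}. (2 / real Q * (s + 3 * r)) ^ CARD('n))"
    using measure_cbox_Int_near_lattice_dirichlet_le[OF assms(1,2) _ assms(3), where 'n = 'n]
    by (intro sum_mono) (simp add: Bad_q_def C_def)
  finally have measure_Bad: "measure lebesgue Bad \<le> real n * (2 / real Q * (s + 3 * r)) ^ CARD('n)"
    by simp
  have measure_C: "measure lebesgue C = s ^ CARD('n)"
    unfolding C_def using assms by (subst measure_cbox_cart) auto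
  show thesis
  proof (rule that[of "C - Bad"])
    show "C - Bad \<in> lmeasurable" using C_lm Bad_lm by auto
    show "C - Bad \<subseteq> cbox (\<chi> _. a) (\<chi> _. a + s)" by (auto simp: C_def)
    show "s ^ CARD('n) - real n * (2 / real Q * (s + 3 * r)) ^ CARD('n) \<le> measure lebesgue (C - Bad)"
      using measure_diff_le_measure_setdiff[OF C_lm Bad_lm] measure_C measure_Bad by simp
  next
    fix y assume y: "y \<in> C - Bad"
    obtain q z where q: "1 \<le> q" "q \<le> Q ^ CARD('n)"
      and z: "\<And>i. \<bar>y $ i - r / real q * of_int (z $ i)\<bar> < r / (real q * real Q)"
      by (rule simultaneous_dirichlet_scaled[OF assms(3,2), of y]) blast
    have "y \<in> near_lattice (r / real q) (r / (real q * real Q))"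
      using z unfolding near_lattice_def by (auto intro: less_imp_le)
    then have "n < q"
      using y q(1) unfolding Bad_def Bad_q_def by (meson DiffE IntI UN_I atLeastAtMost_iff not_le)
    with q z show "\<exists>q :: nat. n < q \<and> q \<le> Q ^ CARD('n) \<and>
       (\<exists>z :: int ^ 'n. \<forall>i. \<bar>y $ i - r / real q * of_int (z $ i)\<bar> < r / (real q * real Q))"
      by blast
  qed
qed

lemma large_set_approximable_with_denominator_range:
  fixes a s r K d :: real
  defines "N \<equiv> CARD('n::finite)"
  assumes s: "0 < s" and r: "0 < r" and d: "1 \<le> d" "2 * d ^ N \<le> K"
    and r_small: "2 ^ N * (3 * r) \<le> s / 2"
  obtains Q :: nat and G :: "(real ^ 'n) set"
  where "d - 1 < real Q" "G \<in> lmeasurable" "G \<subseteq> cbox (\<chi> _. a) (\<chi> _. a + s)"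
    "s ^ N / 4 \<le> measure lebesgue G"
    "\<And>y. y \<in> G \<Longrightarrow> \<exists>q :: nat. K / 4 ^ (N + 1) < real q \<and> real q < K \<and>
       (\<exists>z :: int ^ 'n. \<forall>i. \<bar>y $ i - r / real q * of_int (z $ i)\<bar> < r / (real q * real Q))"
proof -
  have N: "N \<ge> 1" by (simp add: N_def)
  obtain Q :: nat where Q: "Q \<ge> 1" "d - 1 < real Q" "2 * real Q ^ N \<le> K" "K < 2 ^ (N + 1) * real Q ^ N"
    using exists_nat_power_bracket[OF N d] by blast
  have Q_pos: "real Q > 0" using Q(1) by simp
  have K_pos: "K > 0" using Q(3) zero_less_power[OF Q_pos, of N] by linarith
  define n where "n = nat \<lfloor>K / 4 ^ (N + 1)\<rfloor>"
  obtain G :: "(real ^ 'n) set" where G: "G \<in> lmeasurable" "G \<subseteq> cbox (\<chi> _. a) (\<chi> _. a + s)"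
    "s ^ N - real n * (2 / real Q * (s + 3 * r)) ^ N \<le> measure lebesgue G"
    "\<And>y. y \<in> G \<Longrightarrow> \<exists>q :: nat. n < q \<and> q \<le> Q ^ N \<and>
       (\<exists>z :: int ^ 'n. \<forall>i. \<bar>y $ i - r / real q * of_int (z $ i)\<bar> < r / (real q * real Q))"
    using large_well_approximable_subset_cbox[OF s r Q(1), where n = n and a = a] unfolding N_def by blast
  have "real n * (2 / real Q) ^ N \<le> 1 / 2"
  proof -
    have "real n * (2 / real Q) ^ N \<le> K / 4 ^ (N + 1) * (2 / real Q) ^ N"
      using K_pos by (intro mult_right_mono) (auto simp: n_def)
    also have "\<dots> = K / (2 ^ (N + 1) * real Q ^ N) / 2"
      using power_mult_distrib[of "2 :: real" 2 N] by (simp add: power_divide field_simps)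
    also have "\<dots> \<le> 1 / 2"
      using Q(4) Q_pos by (simp add: mult_ac)
    finally show ?thesis .
  qed
  moreover have "(s + 3 * r) ^ N \<le> 3 / 2 * s ^ N"
    using s r r_small by (intro power_add_le_three_halves) auto
  ultimately have "real n * (2 / real Q) ^ N * (s + 3 * r) ^ N \<le> 1 / 2 * (3 / 2 * s ^ N)"
    by (rule mult_mono) (use s r in auto)
  then have "s ^ N / 4 \<le> measure lebesgue G"
    using G(3)[unfolded power_mult_distrib] by (simp only: mult.assoc)
  moreover have "\<exists>q :: nat. K / 4 ^ (N + 1) < real q \<and> real q < K \<and>
       (\<exists>z :: int ^ 'n. \<forall>i. \<bar>y $ i - r / real q * of_int (z $ i)\<bar> < r / (real q * real Q))"
    if y: "y \<in> G" for y
  proof -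
    obtain q z where q: "n < q" "q \<le> Q ^ N"
      and z: "\<And>i. \<bar>y $ i - r / real q * of_int (z $ i)\<bar> < r / (real q * real Q)"
      using G(4)[OF y] by blast
    have "real q \<le> real Q ^ N"
      using q(2) by (simp flip: of_nat_power)
    then have "real q < K"
      using Q(3) Q_pos zero_less_power[of "real Q" N] by linarith
    moreover have "K / 4 ^ (N + 1) < real q"
      using q(1) unfolding n_def by linarith
    ultimately show ?thesis using z by blast
  qed
  ultimately show thesis
    using that Q(2) G(1,2) by blast
qed

section \<open>The dilated set \<open>XR/T\<close>\<close>

definition XR_div_T :: "real \<Rightarrow> real \<Rightarrow> real \<Rightarrow> (real ^ 'n::finite) set" where
  "XR_div_T \<sigma> \<epsilon>2 R = {(R / t) *\<^sub>R x | x t. x \<in> (setX \<sigma> \<epsilon>2 R :: (real ^ 'n) set) \<and> t \<in> setT TYPE('n) \<sigma> R}"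

lemma minkowski_sum_ball:
  fixes L :: "'a::real_normed_vector set"
  shows "minkowski_sum L (ball 0 r) = (\<Union>a\<in>L. ball a r)"
proof (intro equalityI subsetI)
  fix x assume "x \<in> minkowski_sum L (ball 0 r)"
  then obtain a b where "x = a + b" "a \<in> L" "norm b < r"
    unfolding minkowski_sum_def by auto
  then show "x \<in> (\<Union>a\<in>L. ball a r)" by (auto simp: dist_norm intro!: bexI[of _ a])
next
  fix x assume "x \<in> (\<Union>a\<in>L. ball a r)"
  then obtain a where "a \<in> L" "dist a x < r" by auto
  then show "x \<in> minkowski_sum L (ball 0 r)"
    unfolding minkowski_sum_def
    by (intro CollectI exI[of _ a] exI[of _ "x - a"]) (auto simp: dist_norm norm_minus_commute)
qed

lemma open_annulus: "open (annulus u v)"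
  unfolding annulus_def by (intro open_Collect_conj open_Collect_less continuous_intros)

lemma open_XR_div_T:
  assumes "R > 0"
  shows "open (XR_div_T \<sigma> \<epsilon>2 R :: (real ^ 'n::finite) set)"
proof -
  have open_X: "open (setX \<sigma> \<epsilon>2 R :: (real ^ 'n) set)"
    unfolding setX_def minkowski_sum_ball by (intro open_Int open_annulus open_UN) auto
  have "t > 0" if "t \<in> setT TYPE('n) \<sigma> R" for t
    using that unfolding setT_def by (auto intro: order.strict_trans[rotated])
  then have "open ((\<lambda>x. (R / t) *\<^sub>R x) ` (setX \<sigma> \<epsilon>2 R :: (real ^ 'n) set))"
    if "t \<in> setT TYPE('n) \<sigma> R" for t
    using that assms open_scaling[OF _ open_X, of "R / t"] by fastforce
  moreover have "XR_div_T \<sigma> \<epsilon>2 R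
      = (\<Union>t\<in>setT TYPE('n) \<sigma> R. (\<lambda>x. (R / t) *\<^sub>R x) ` (setX \<sigma> \<epsilon>2 R :: (real ^ 'n) set))"
    unfolding XR_div_T_def by auto
  ultimately show ?thesis by auto
qed

lemma scaleR_mem_annulus:
  fixes y :: "real ^ 'n::finite" and R t :: real
  assumes R: "R > 0" and t: "4 powr (- real CARD('n) - 1) < t" "t < 1"
    and y: "R / 4 < norm y" "norm y < R / 2"
  shows "(t / R) *\<^sub>R y \<in> annulus (4 powr (- real CARD('n) - 2)) (2 * sqrt (real CARD('n)))"
proof -
  have "0 < 4 powr (- real CARD('n) - 1)" by simp
  then have t_pos: "t > 0" using t by linarith
  have norm_x: "norm ((t / R) *\<^sub>R y) = t * (norm y / R)"
    using t_pos R by simp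
  have "4 powr (- real CARD('n) - 2) * 4 = 4 powr ((- real CARD('n) - 2) + 1)"
    by (subst powr_add) simp
  also have "(- real CARD('n) - 2) + 1 = - real CARD('n) - 1"
    by simp
  finally have "4 powr (- real CARD('n) - 2) = 4 powr (- real CARD('n) - 1) * (1 / 4)"
    by simp
  also have "\<dots> < t * (norm y / R)"
    using t y R t_pos by (intro mult_strict_mono) (auto simp: field_simps)
  finally have "4 powr (- real CARD('n) - 2) < t * (norm y / R)" .
  moreover have "t * (norm y / R) < 1 * (1 / 2)"
    using t y R t_pos by (intro mult_strict_mono) (auto simp: field_simps)
  moreover have "1 \<le> sqrt (real CARD('n))" by simp
  ultimately show ?thesis
    unfolding annulus_def mem_Collect_eq norm_x by linarith
qed

lemma denominator_mem_setT:
  fixes q :: nat and R \<sigma> :: real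
  assumes R: "R > 0"
  defines "m \<equiv> R powr \<sigma>"
  assumes q: "R / m\<^sup>2 / 4 ^ (CARD('n) + 1) < real q" "real q < R / m\<^sup>2"
  shows "real q * m\<^sup>2 / R \<in> setT TYPE('n::finite) \<sigma> R"
proof -
  have m: "m > 0" using R by (simp add: m_def)
  have "- real CARD('n) - 1 = - real (CARD('n) + 1)"
    by simp
  then have "4 powr (- real CARD('n) - 1) = 1 / 4 ^ (CARD('n) + 1)"
    by (simp only: powr_minus_divide powr_realpow)
  moreover have "1 / 4 ^ (CARD('n) + 1) < real q * m\<^sup>2 / R"
    using q(1) R m by (simp add: field_simps)
  moreover have "real q * m\<^sup>2 / R < 1"
    using q(2) R m by (simp add: field_simps)
  moreover have "R powr (2 * \<sigma> - 1) = m\<^sup>2 / R"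
    using R by (simp add: m_def powr_diff powr_add[symmetric] power2_eq_square)
  ultimately show ?thesis
    unfolding setT_def by (auto simp: mult.commute intro!: exI[of _ "int q"])
qed

lemma mem_XR_div_T:
  fixes y :: "real ^ 'n::finite" and z :: "int ^ 'n" and q :: nat and R \<sigma> \<epsilon>2 :: real
  assumes R: "R > 0"
  defines "m \<equiv> R powr \<sigma>"
  assumes q: "R / m\<^sup>2 / 4 ^ (CARD('n) + 1) < real q" "real q < R / m\<^sup>2"
    and close: "norm (y - (R / m / real q) *\<^sub>R (\<chi> i. of_int (z $ i))) < \<epsilon>2"
    and y: "R / 4 < norm y" "norm y < R / 2"
  shows "y \<in> XR_div_T \<sigma> \<epsilon>2 R"
proof -
  define t where "t = real q * m\<^sup>2 / R"
  define x where "x = (t / R) *\<^sub>R y"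
  define b where "b = (t / R) *\<^sub>R (y - (R / m / real q) *\<^sub>R (\<chi> i. of_int (z $ i)))"
  have m: "m > 0" using R by (simp add: m_def)
  have t_T: "t \<in> setT TYPE('n) \<sigma> R"
    unfolding t_def m_def using denominator_mem_setT[OF R q[unfolded m_def]] .
  then have t: "4 powr (- real CARD('n) - 1) < t" "t < 1"
    by (simp_all add: setT_def)
  moreover have "0 < 4 powr (- real CARD('n) - 1)" by simp
  ultimately have t_pos: "t > 0" by linarith
  then have q_pos: "real q > 0"
    using R m by (simp add: t_def zero_less_mult_iff zero_less_divide_iff)
  have "x \<in> setX \<sigma> \<epsilon>2 R"
  proof -
    have "x = (R powr (\<sigma> - 1)) *\<^sub>R (\<chi> i. of_int (z $ i)) + b"
      using R m q_pos by (simp add: x_def b_def t_def m_def powr_diff algebra_simps power2_eq_square)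
    moreover have "norm b < \<epsilon>2 / R"
    proof -
      have "norm b = t * norm (y - (R / m / real q) *\<^sub>R (\<chi> i. of_int (z $ i))) / R"
        using t_pos R by (simp add: b_def)
      also have "\<dots> < \<epsilon>2 / R"
        using close t t_pos R mult_left_le_one_le[OF norm_ge_zero, of t "y - (R / m / real q) *\<^sub>R (\<chi> i. of_int (z $ i))"]
        by (intro divide_strict_right_mono) auto
      finally show ?thesis .
    qed
    moreover have "x \<in> annulus (4 powr (- real CARD('n) - 2)) (2 * sqrt (real CARD('n)))"
      unfolding x_def using scaleR_mem_annulus[OF R t y] .
    moreover have "(\<chi> i. of_int (z $ i)) \<in> int_lattice" by (simp add: int_lattice_def)
    ultimately show ?thesis
      unfolding setX_def minkowski_sum_def by auto
  qed
  moreover have "y = (R / t) *\<^sub>R x" using R t_pos by (simp add: x_def)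
  ultimately show ?thesis using t_T unfolding XR_div_T_def by blast
qed

lemma norm_le_card_mult_cart:
  fixes x :: "real ^ 'n::finite"
  assumes "\<And>i. \<bar>x $ i\<bar> \<le> e"
  shows "norm x \<le> real CARD('n) * e"
  using norm_le_l1_cart[of x] sum_mono[of UNIV "\<lambda>i. \<bar>x $ i\<bar>" "\<lambda>_. e"] assms by simp

lemma norm_bounds_cbox_const:
  fixes y :: "real ^ 'n::finite"
  assumes "0 \<le> a" "y \<in> cbox (\<chi> _. a) (\<chi> _. b)"
  shows "sqrt (real CARD('n)) * a \<le> norm y" "norm y \<le> sqrt (real CARD('n)) * b"
proof -
  have y: "a \<le> y $ i" "y $ i \<le> b" for i
    using assms(2) by (auto simp: mem_box_cart)
  have b: "0 \<le> b"
    using y[of undefined] assms(1) by linarith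
  have sqrt_sum_const: "sqrt (\<Sum>i\<in>(UNIV :: 'n set). c\<^sup>2) = sqrt (real CARD('n)) * c" if "0 \<le> c" for c
    using that by (simp add: real_sqrt_mult)
  have norm_y: "norm y = sqrt (\<Sum>i\<in>UNIV. (y $ i)\<^sup>2)"
    by (simp add: norm_vec_def L2_set_def)
  have "(\<Sum>i\<in>(UNIV :: 'n set). a\<^sup>2) \<le> (\<Sum>i\<in>UNIV. (y $ i)\<^sup>2)"
    using y assms(1) by (intro sum_mono power_mono) (auto intro: order_trans)
  then show "sqrt (real CARD('n)) * a \<le> norm y"
    unfolding norm_y sqrt_sum_const[OF assms(1), symmetric] by (rule real_sqrt_le_mono)
  have "(\<Sum>i\<in>UNIV. (y $ i)\<^sup>2) \<le> (\<Sum>i\<in>(UNIV :: 'n set). b\<^sup>2)"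
    using y assms(1) by (intro sum_mono power_mono) (auto intro: order_trans)
  then show "norm y \<le> sqrt (real CARD('n)) * b"
    unfolding norm_y sqrt_sum_const[OF b, symmetric] by (rule real_sqrt_le_mono)
qed

lemma well_approximable_mem_XR_div_T:
  fixes y :: "real ^ 'n::finite" and z :: "int ^ 'n" and q Q :: nat and R \<sigma> \<epsilon>2 :: real
  assumes R: "R > 0" and \<epsilon>: "\<epsilon>2 > 0"
  defines "N \<equiv> CARD('n)" and "m \<equiv> R powr \<sigma>" and "A \<equiv> 4 ^ (CARD('n) + 1)"
  defines "s \<equiv> R / (7 * sqrt (real N))"
  assumes Q: "real N * A * m / \<epsilon>2 < real Q"
    and q: "R / m\<^sup>2 / A < real q" "real q < R / m\<^sup>2"
    and z: "\<And>i. \<bar>y $ i - R / m / real q * of_int (z $ i)\<bar> < R / m / (real q * real Q)"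
    and y: "y \<in> cbox (\<chi> _. 2 * s) (\<chi> _. 2 * s + s)"
  shows "y \<in> XR_div_T \<sigma> \<epsilon>2 R \<inter> ball 0 R"
proof -
  have m: "m > 0" using R by (simp add: m_def)
  have A: "A > 0" by (simp add: A_def)
  have "0 < R / m\<^sup>2 / A"
    using R m A by simp
  then have q_pos: "real q > 0"
    using q(1) by linarith
  have "0 < real N * A * m / \<epsilon>2"
    using m A \<epsilon> by (simp add: N_def)
  then have Q_pos: "real Q > 0"
    using Q by linarith
  have "sqrt (real N) * (2 * s) \<le> norm y" "norm y \<le> sqrt (real N) * (2 * s + s)"
    using norm_bounds_cbox_const[OF _ y] R by (simp_all add: s_def N_def)
  moreover have "sqrt (real N) * s = R / 7"
    by (simp add: s_def N_def)
  ultimately have y_norm: "R / 4 < norm y" "norm y < R / 2"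
    using R by (simp_all add: algebra_simps)
  have "norm (y - (R / m / real q) *\<^sub>R (\<chi> i. of_int (z $ i))) \<le> real N * (R / m / (real q * real Q))"
    unfolding N_def using z by (intro norm_le_card_mult_cart) (simp add: less_imp_le)
  also have "\<dots> < real N * (A * m / real Q)"
    using q(1) R m A q_pos Q_pos by (intro mult_strict_left_mono) (auto simp: N_def field_simps power2_eq_square)
  also have "\<dots> < \<epsilon>2"
    using Q Q_pos \<epsilon> by (simp add: field_simps)
  finally have "y \<in> XR_div_T \<sigma> \<epsilon>2 R"
    using mem_XR_div_T[OF R q[unfolded A_def m_def] _ y_norm] unfolding m_def by blast
  then show ?thesis
    using y_norm R by simp
qed

lemma measure_XR_div_T_ge:
  fixes \<sigma> \<epsilon>2 R :: real
  assumes \<epsilon>: "\<epsilon>2 > 0" and R: "R > 0"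
  defines "N \<equiv> CARD('n::finite)" and "m \<equiv> R powr \<sigma>" and "A \<equiv> 4 ^ (CARD('n) + 1)"
  assumes K: "2 * (real N * A * m / \<epsilon>2 + 1) ^ N \<le> R / m\<^sup>2"
    and m: "2 ^ N * 42 * sqrt (real N) \<le> m"
  shows "ennreal ((1 / (7 * sqrt (real N))) ^ N / 4 * R ^ N)
    \<le> emeasure lebesgue (XR_div_T \<sigma> \<epsilon>2 R \<inter> ball 0 R :: (real ^ 'n) set)"
proof -
  define s where "s = R / (7 * sqrt (real N))"
  have m_pos: "m > 0" using R by (simp add: m_def)
  have s_pos: "s > 0" using R by (simp add: s_def N_def)
  have "2 ^ N * (3 * (R / m)) = 2 ^ N * 42 * sqrt (real N) * (R / (14 * sqrt (real N) * m))"
    by (simp add: N_def)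
  also have "\<dots> \<le> m * (R / (14 * sqrt (real N) * m))"
    using m R m_pos by (intro mult_right_mono) auto
  finally have r_small: "2 ^ N * (3 * (R / m)) \<le> s / 2"
    using m_pos by (simp add: s_def)
  have d: "1 \<le> real N * A * m / \<epsilon>2 + 1"
    using \<epsilon> m_pos by (simp add: A_def)
  obtain Q :: nat and G :: "(real ^ 'n) set" where Q: "real N * A * m / \<epsilon>2 < real Q"
    and G: "G \<in> lmeasurable" "G \<subseteq> cbox (\<chi> _. 2 * s) (\<chi> _. 2 * s + s)" "s ^ N / 4 \<le> measure lebesgue G"
      "\<And>y. y \<in> G \<Longrightarrow> \<exists>q :: nat. R / m\<^sup>2 / A < real q \<and> real q < R / m\<^sup>2 \<and>
         (\<exists>z :: int ^ 'n. \<forall>i. \<bar>y $ i - R / m / real q * of_int (z $ i)\<bar> < R / m / (real q * real Q))"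
    using large_set_approximable_with_denominator_range[OF s_pos _ d[unfolded N_def]
        K[unfolded N_def] r_small[unfolded N_def], where a = "2 * s"]
      R m_pos unfolding N_def A_def by auto
  have G_sub: "G \<subseteq> XR_div_T \<sigma> \<epsilon>2 R \<inter> ball 0 R"
    using G(2,4) well_approximable_mem_XR_div_T[OF R \<epsilon>, where \<sigma> = \<sigma> and Q = Q] Q
    unfolding m_def A_def s_def N_def by blast
  have "(XR_div_T \<sigma> \<epsilon>2 R \<inter> ball 0 R :: (real ^ 'n) set) \<in> sets lebesgue"
    using open_XR_div_T[OF R] by (intro fmeasurableD lmeasurable_open) (auto simp: bounded_Int)
  have "ennreal ((1 / (7 * sqrt (real N))) ^ N / 4 * R ^ N) = ennreal (s ^ N / 4)"
    by (simp add: s_def power_divide)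
  also have "\<dots> \<le> emeasure lebesgue G"
    using G(1,3) by (simp add: emeasure_eq_measure2 ennreal_leI)
  also have "\<dots> \<le> emeasure lebesgue (XR_div_T \<sigma> \<epsilon>2 R \<inter> ball 0 R :: (real ^ 'n) set)"
    by (rule emeasure_mono[OF G_sub]) fact
  finally show ?thesis .
qed

lemma div_square_powr_eq:
  fixes R \<sigma> :: real and N :: nat
  assumes "R > 0" "\<sigma> > 0"
  defines "m \<equiv> R powr \<sigma>"
  shows "R / m\<^sup>2 = m powr (1 / \<sigma> - 2 - real N) * m ^ N"
proof -
  have m: "m > 0" using assms by (simp add: m_def)
  have R: "R = m powr (1 / \<sigma>)"
    using assms by (simp add: m_def powr_powr)
  have "m powr (1 / \<sigma> - 2 - real N) * m ^ N = m powr (1 / \<sigma> - 2 - real N) * m powr real N"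
    using m by (simp add: powr_realpow)
  also have "\<dots> = m powr (1 / \<sigma> - 2 - real N + real N)"
    by (rule powr_add[symmetric])
  also have "\<dots> = m powr (1 / \<sigma>) / m powr 2"
    by (simp add: powr_diff)
  also have "\<dots> = m powr (1 / \<sigma>) / m\<^sup>2"
    using m by (simp add: powr_numeral)
  finally show ?thesis by (simp add: R)
qed

lemma XR_div_T_thresholds:
  fixes \<sigma> \<epsilon>2 :: real
  assumes "0 < \<sigma>" "\<sigma> < 1 / (real CARD('n::finite) + 2)" "\<epsilon>2 > 0"
  defines "N \<equiv> CARD('n)" and "A \<equiv> 4 ^ (CARD('n) + 1)"
  obtains M :: nat
  where "\<And>R m. R > 0 \<Longrightarrow> R powr \<sigma> = real m \<Longrightarrow> M \<le> m \<Longrightarrow>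
           2 * (real N * A * real m / \<epsilon>2 + 1) ^ N \<le> R / (real m)\<^sup>2 \<and> 2 ^ N * 42 * sqrt (real N) \<le> real m"
proof -
  define D where "D = real N * A / \<epsilon>2 + 1"
  define \<gamma> where "\<gamma> = 1 / \<sigma> - 2 - real N"
  define B where "B = 2 * D ^ N"
  define M where "M = nat \<lceil>max (max 1 (B powr (1 / \<gamma>))) (2 ^ N * 42 * sqrt (real N))\<rceil>"
  \<comment> \<open>The only use of \<open>\<sigma> < 1/(n+2)\<close>: it makes \<open>R/m\<^sup>2 = m\<^sup>\<gamma> m\<^sup>n\<close> outgrow \<open>m\<^sup>n\<close>.\<close>
  have \<gamma>: "\<gamma> > 0"
    using assms(1,2) by (simp add: \<gamma>_def N_def field_simps)
  have D: "D \<ge> 1" using assms(3) by (simp add: D_def A_def)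
  show thesis
  proof (rule that[of M], intro conjI)
    fix R m assume R: "R > 0" and m: "R powr \<sigma> = real m" and M: "M \<le> m"
    have m_ge: "1 \<le> real m" "B powr (1 / \<gamma>) \<le> real m" "2 ^ N * 42 * sqrt (real N) \<le> real m"
      using M unfolding M_def by linarith+
    then show "2 ^ N * 42 * sqrt (real N) \<le> real m" by simp
    have "B = (B powr (1 / \<gamma>)) powr \<gamma>"
      using D \<gamma> by (simp add: B_def powr_powr)
    also have "\<dots> \<le> real m powr \<gamma>"
      using m_ge \<gamma> by (intro powr_mono2) auto
    finally have B: "B \<le> real m powr \<gamma>" .
    have "real N * A * real m / \<epsilon>2 + 1 \<le> D * real m"
      using m_ge assms(3) by (simp add: D_def A_def field_simps)
    then have "(real N * A * real m / \<epsilon>2 + 1) ^ N \<le> (D * real m) ^ N"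
      using assms(3) by (intro power_mono) (auto simp: A_def)
    then have "2 * (real N * A * real m / \<epsilon>2 + 1) ^ N \<le> B * real m ^ N"
      by (simp add: B_def power_mult_distrib)
    also have "\<dots> \<le> real m powr \<gamma> * real m ^ N"
      using B by (simp add: mult_right_mono)
    also have "\<dots> = R / (real m)\<^sup>2"
      using div_square_powr_eq[OF R assms(1), of N] m by (simp add: \<gamma>_def)
    finally show "2 * (real N * A * real m / \<epsilon>2 + 1) ^ N \<le> R / (real m)\<^sup>2" .
  qed
qed

theorem proposition3p2:
  fixes \<sigma> \<epsilon>2 :: real
  assumes "CARD('n::finite) \<ge> 2"
    and "0 < \<sigma>" and "\<sigma> < 1 / (real CARD('n) + 2)"
    and "\<epsilon>2 > 0"
  shows "\<exists>c>0. \<exists>M::nat. \<forall>R>0. \<forall>m::nat. m \<ge> M \<and> R powr \<sigma> = real m \<longrightarrow>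
           emeasure lebesgue
             ({(R / t) *\<^sub>R x | x t. x \<in> (setX \<sigma> \<epsilon>2 R :: (real ^ 'n) set) \<and> t \<in> setT TYPE('n) \<sigma> R}
              \<inter> ball 0 R)
           \<ge> ennreal (c * R ^ CARD('n))"
proof -
  obtain M where M: "\<And>R m. R > 0 \<Longrightarrow> R powr \<sigma> = real m \<Longrightarrow> M \<le> m \<Longrightarrow>
      2 * (real CARD('n) * 4 ^ (CARD('n) + 1) * real m / \<epsilon>2 + 1) ^ CARD('n) \<le> R / (real m)\<^sup>2
      \<and> 2 ^ CARD('n) * 42 * sqrt (real CARD('n)) \<le> real m"
    using XR_div_T_thresholds[OF assms(2-4)] by blast
  define c where "c = (1 / (7 * sqrt (real CARD('n)))) ^ CARD('n) / 4"
  have "c > 0" by (simp add: c_def)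
  moreover have "ennreal (c * R ^ CARD('n)) \<le> emeasure lebesgue (XR_div_T \<sigma> \<epsilon>2 R \<inter> ball 0 R :: (real ^ 'n) set)"
    if "R > 0" "M \<le> m" "R powr \<sigma> = real m" for R m
    using measure_XR_div_T_ge[OF assms(4) \<open>R > 0\<close>, where 'n = 'n and \<sigma> = \<sigma>] M[OF that(1,3,2)] that(3)
    by (simp add: c_def)
  ultimately show ?thesis
    unfolding XR_div_T_def by blast
qed

end
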